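(* In the setting below, let $\tilde B_\circ$ be the $m\times n$ extended exchange matrix of the initial seed $(\mathbf{x}(t_\circ),\mathbf{y}(t_\circ),B(t_\circ))$ of the original pattern. Then the new initial seed $(\bar{\mathbf x}(t_\circ),\bar{\mathbf y}(t_\circ),B(t_\circ))$ has extended exchange matrix $\overline{\tilde B}_\circ=\Psi\tilde B_\circ$, where $\Psi=(\psi_{ij})$ is the $\bar m\times m$ integer matrix defined by $\psi(x_j)=\prod_{i=1}^{\bar m}\bar x_i^{\psi_{ij}}$. Setting: $n\le m$, $n\le\bar m$; $\mathcal F,\bar{\mathcal F}$ are the fields of rational functions in $x_1,\dots,x_m$ and $\bar x_1,\dots,\bar x_{\bar m}$; $\varphi:\mathbb{Q}_{\mathrm{sf}}(x_1,\dots,x_m)\to\mathrm{Trop}(\bar x_{n+1},\dots,\bar x_{\bar m})$ is a semifield homomorphism; $\psi:\mathbb{Q}_{\mathrm{sf}}(x_1,\dots,x_m)\to\mathbb{Q}_{\mathrm{sf}}(\bar x_1,\dots,\bar x_{\bar m})$ is the semifield homomorphism with $\psi(x_i)=\bar x_i\varphi(x_i)$ for $i\le n$, $\psi(x_i)=\varphi(x_i)$ for $i>n$; $(\mathbf{x}(t),\mathbf{y}(t),B(t))_{t\in\mathbb{T}_n}$ is a seed pattern in $\mathcal F$ with frozen variables $x_{n+1},\dots,x_m$ and initial cluster $\mathbf{x}(t_\circ)=(x_1,\dots,x_n)$; and $\bar x_{i;t}=\psi(x_{i;t})/\varphi(x_{i;t})$, $\bar y_{k;t}=\varphi(y_{k;t})\prod_{i=1}^n\varphi(x_{i;t})^{b^t_{ik}}$,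 which form a seed pattern in $\bar{\mathcal F}$ with frozen variables $\bar x_{n+1},\dots,\bar x_{\bar m}$.
   Context: $\mathbb{Q}_{\mathrm{sf}}(u_1,\dots,u_l)$ is the semifield of subtraction-free rational expressions; $\mathrm{Trop}(u_1,\dots,u_l)$ is the group of Laurent monomials with $\prod u_j^{a_j}\oplus\prod u_j^{b_j}=\prod u_j^{\min(a_j,b_j)}$. A seed pattern in $\mathcal F$ with frozen variables $x_{n+1},\dots,x_m$ assigns to each vertex $t$ of the $n$-regular tree $\mathbb{T}_n$ (edges labeled $1,\dots,n$, distinct labels at each vertex) a triple $(\mathbf{x}(t),\mathbf{y}(t),B(t))$ with $\mathbf{x}(t)=(x_{1;t},\dots,x_{n;t})$ such that $x_{1;t},\dots,x_{n;t},x_{n+1},\dots,x_m$ freely generate $\mathcal F$, $\mathbf y(t)=(y_{1;t},\dots,y_{n;t})\in\mathrm{Trop}(x_{n+1},\dots,x_m)^n$, $B(t)=(b^t_{ij})$ skew-symmetrizable, related along each edge $t\overset{k}{-}t'$ by matrix mutation $\mu_k$, tropical $y$-mutation ($y_{k;t'}=y_{k;t}^{-1}$, $y_{j;t'}=y_{j;t}y_{k;t}^{\max(b^t_{kj},0)}(y_{k;t}\oplus1)^{-b^t_{kj}}$ for $j\neq k$), $x_{i;t'}=x_{i;t}$ ($i\ne k$) and $x_{k;t}x_{k;t'}=(y_{k;t}\prod_{b^t_{ik}>0}x_{i;t}^{b^t_{ik}}+\prod_{b^t_{ik}<0}x_{i;t}^{-b^t_{ik}})/(y_{k;t}\oplus1)$.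 The extended exchange matrix of a seed $(\mathbf x,\mathbf y,B)$ with frozen variables $x_{n+1},\dots,x_m$ is the $m\times n$ matrix $\tilde B=(b_{ik})$ whose top $n\times n$ part is $B$ and whose remaining entries are determined by $y_k=\prod_{i=n+1}^m x_i^{b_{ik}}$ (and analogously with $\bar m$ and $\bar x_i$ for the new pattern). *)

theory Defs
  imports Complex_Main
begin

text \<open>An element of Q_sf(x_1,...,x_N) is represented by the (positive) function it
  defines on the positive orthant; it is set to 0 outside, so that equality of
  functions is equality of rational functions.\<close>

definition pos_pt :: "nat \<Rightarrow> (nat \<Rightarrow> real) \<Rightarrow> bool" where
  "pos_pt N p \<longleftrightarrow> (\<forall>i\<in>{1..N}. p i > 0)"

definition coord :: "nat \<Rightarrow> nat \<Rightarrow> (nat \<Rightarrow> real) \<Rightarrow> real" where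
  "coord N i = (\<lambda>p. if pos_pt N p then p i else 0)"

inductive_set qsf :: "nat \<Rightarrow> ((nat \<Rightarrow> real) \<Rightarrow> real) set" for N where
  gen: "1 \<le> i \<Longrightarrow> i \<le> N \<Longrightarrow> coord N i \<in> qsf N"
| add: "f \<in> qsf N \<Longrightarrow> g \<in> qsf N \<Longrightarrow> (\<lambda>p. f p + g p) \<in> qsf N"
| mult: "f \<in> qsf N \<Longrightarrow> g \<in> qsf N \<Longrightarrow> (\<lambda>p. f p * g p) \<in> qsf N"
| divide: "f \<in> qsf N \<Longrightarrow> g \<in> qsf N \<Longrightarrow> (\<lambda>p. f p / g p) \<in> qsf N"

definition laurent_mon :: "nat \<Rightarrow> (nat \<Rightarrow> int) \<Rightarrow> (nat \<Rightarrow> real) \<Rightarrow> real" where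
  "laurent_mon N e = (\<lambda>p. if pos_pt N p then (\<Prod>i\<in>{1..N}. p i powi e i) else 0)"

text \<open>Trop(u_lo,...,u_hi): a Laurent monomial prod u_j^(a_j) is represented by its
  exponent vector a (zero outside lo..hi); multiplication is addition of exponent
  vectors and the tropical sum is the pointwise minimum.\<close>
definition trop_elems :: "nat \<Rightarrow> nat \<Rightarrow> (nat \<Rightarrow> int) set" where
  "trop_elems lo hi = {a. \<forall>j. j \<notin> {lo..hi} \<longrightarrow> a j = 0}"

definition trop_plus :: "(nat \<Rightarrow> int) \<Rightarrow> (nat \<Rightarrow> int) \<Rightarrow> nat \<Rightarrow> int" where
  "trop_plus a b = (\<lambda>j. min (a j) (b j))"

definition trop_times :: "(nat \<Rightarrow> int) \<Rightarrow> (nat \<Rightarrow> int) \<Rightarrow> nat \<Rightarrow> int" where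
  "trop_times a b = (\<lambda>j. a j + b j)"

definition trop_div :: "(nat \<Rightarrow> int) \<Rightarrow> (nat \<Rightarrow> int) \<Rightarrow> nat \<Rightarrow> int" where
  "trop_div a b = (\<lambda>j. a j - b j)"

definition trop_hom :: "nat \<Rightarrow> nat \<Rightarrow> nat \<Rightarrow> (((nat \<Rightarrow> real) \<Rightarrow> real) \<Rightarrow> (nat \<Rightarrow> int)) \<Rightarrow> bool" where
  "trop_hom N lo hi \<phi> \<longleftrightarrow>
     (\<forall>f\<in>qsf N. \<phi> f \<in> trop_elems lo hi) \<and>
     (\<forall>f\<in>qsf N. \<forall>g\<in>qsf N.
        \<phi> (\<lambda>p. f p + g p) = trop_plus (\<phi> f) (\<phi> g) \<and>
        \<phi> (\<lambda>p. f p * g p) = trop_times (\<phi> f) (\<phi> g) \<and>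
        \<phi> (\<lambda>p. f p / g p) = trop_div (\<phi> f) (\<phi> g))"

definition sf_hom :: "nat \<Rightarrow> nat \<Rightarrow> (((nat \<Rightarrow> real) \<Rightarrow> real) \<Rightarrow> ((nat \<Rightarrow> real) \<Rightarrow> real)) \<Rightarrow> bool" where
  "sf_hom N M \<psi> \<longleftrightarrow>
     (\<forall>f\<in>qsf N. \<psi> f \<in> qsf M) \<and>
     (\<forall>f\<in>qsf N. \<forall>g\<in>qsf N.
        \<psi> (\<lambda>p. f p + g p) = (\<lambda>p. \<psi> f p + \<psi> g p) \<and>
        \<psi> (\<lambda>p. f p * g p) = (\<lambda>p. \<psi> f p * \<psi> g p) \<and>
        \<psi> (\<lambda>p. f p / g p) = (\<lambda>p. \<psi> f p / \<psi> g p))"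

definition skew_symmetrizable :: "nat \<Rightarrow> (nat \<Rightarrow> nat \<Rightarrow> int) \<Rightarrow> bool" where
  "skew_symmetrizable n B \<longleftrightarrow>
     (\<exists>d :: nat \<Rightarrow> int. (\<forall>i\<in>{1..n}. d i > 0) \<and>
        (\<forall>i\<in>{1..n}. \<forall>j\<in>{1..n}. d i * B i j = - (d j * B j i)))"

text \<open>Extended exchange matrix of a seed with exchange matrix B and coefficient
  tuple y (y k = exponent vector of y_k in Trop of the frozen variables):
  top part is B, and for frozen i the entry b_ik is the exponent of x_i in y_k.\<close>
definition ext_matrix :: "nat \<Rightarrow> (nat \<Rightarrow> nat \<Rightarrow> int) \<Rightarrow> (nat \<Rightarrow> nat \<Rightarrow> int) \<Rightarrow> nat \<Rightarrow> nat \<Rightarrow> int" where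
  "ext_matrix n B y i k = (if i \<le> n then B i k else y k i)"

end

theory Submission
  imports Defs
begin

text \<open>Evaluating at the point with i-th coordinate 2 and all others 1 reads off the i-th
  exponent of a Laurent monomial. Hence \<Psi> = \<Phi> + I', where \<Phi> is the exponent matrix of the
  tropical values \<phi>(x_j) and I' is the identity on the mutable indices. Since \<phi> is a
  homomorphism into Laurent monomials, it sends a Laurent monomial in the x_j to the
  corresponding integer combination of the columns of \<Phi>; and \<Phi> vanishes on the mutable rows.
  Multiplying out (\<Phi> + I') times the extended matrix therefore gives B on the mutable rows and
  the exponents of \<phi>(y_k) * prod_i \<phi>(x_i)^(b_ik) on the frozen rows.\<close>

definition unit_pt :: "nat \<Rightarrow> nat \<Rightarrow> real" where
  "unit_pt i = (\<lambda>l. if l = i then 2 else 1)"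

lemma pos_pt_unit_pt: "pos_pt N (unit_pt i)"
  unfolding pos_pt_def unit_pt_def by simp

lemma laurent_mon_at_unit_pt:
  assumes "i \<in> {1..N}"
  shows "laurent_mon N e (unit_pt i) = 2 powi e i"
proof -
  have "(\<Prod>l\<in>{1..N}. unit_pt i l powi e l) = (\<Prod>l\<in>{1..N}. if l = i then 2 powi e l else 1)"
    by (rule prod.cong) (auto simp: unit_pt_def)
  also have "\<dots> = 2 powi e i"
    using assms by (simp add: prod.delta)
  finally show ?thesis
    unfolding laurent_mon_def using pos_pt_unit_pt[of N i] by simp
qed

lemma laurent_mon_inject:
  assumes "laurent_mon N a = laurent_mon N b" and "i \<in> {1..N}"
  shows "a i = b i"
proof -
  have "(2::real) powi a i = 2 powi b i"
    using assms by (metis laurent_mon_at_unit_pt)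
  then show ?thesis
    by (metis linorder_neqE less_irrefl power_int_strict_increasing one_less_numeral_iff
        semiring_norm(76))
qed

lemma coord_mult_laurent_mon:
  assumes "j \<in> {1..N}"
  shows "(\<lambda>p. coord N j p * laurent_mon N e p) = laurent_mon N (e(j := e j + 1))"
proof
  fix p
  show "coord N j p * laurent_mon N e p = laurent_mon N (e(j := e j + 1)) p"
  proof (cases "pos_pt N p")
    case True
    then have "p j \<noteq> 0"
      using assms unfolding pos_pt_def by force
    then have "p j * (\<Prod>l\<in>{1..N}. p l powi e l)
        = p j powi (e j + 1) * (\<Prod>l\<in>{1..N} - {j}. p l powi e l)"
      using assms by (simp add: prod.remove power_int_add_1')
    also have "\<dots> = (\<Prod>l\<in>{1..N}. p l powi (e(j := e j + 1)) l)"
      using assms by (simp add: prod.remove)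
    finally show ?thesis
      using True by (simp add: coord_def laurent_mon_def)
  qed (simp add: coord_def laurent_mon_def)
qed

lemma trop_hom_mult:
  "trop_hom m lo hi \<phi> \<Longrightarrow> f \<in> qsf m \<Longrightarrow> g \<in> qsf m \<Longrightarrow>
    \<phi> (\<lambda>p. f p * g p) = (\<lambda>l. \<phi> f l + \<phi> g l)"
  by (simp add: trop_hom_def trop_times_def)

lemma trop_hom_divide:
  "trop_hom m lo hi \<phi> \<Longrightarrow> f \<in> qsf m \<Longrightarrow> g \<in> qsf m \<Longrightarrow>
    \<phi> (\<lambda>p. f p / g p) = (\<lambda>l. \<phi> f l - \<phi> g l)"
  by (simp add: trop_hom_def trop_div_def)

lemma trop_hom_vanishes_below:
  "trop_hom m lo hi \<phi> \<Longrightarrow> f \<in> qsf m \<Longrightarrow> j < lo \<Longrightarrow> \<phi> f j = 0"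
  by (simp add: trop_hom_def trop_elems_def)

definition qsf_one :: "nat \<Rightarrow> (nat \<Rightarrow> real) \<Rightarrow> real" where
  "qsf_one m = (\<lambda>p. if pos_pt m p then 1 else 0)"

definition coord_powi :: "nat \<Rightarrow> nat \<Rightarrow> int \<Rightarrow> (nat \<Rightarrow> real) \<Rightarrow> real" where
  "coord_powi m j k = (\<lambda>p. if pos_pt m p then p j powi k else 0)"

definition laurent_mon_on :: "nat \<Rightarrow> nat set \<Rightarrow> (nat \<Rightarrow> int) \<Rightarrow> (nat \<Rightarrow> real) \<Rightarrow> real" where
  "laurent_mon_on m S e = (\<lambda>p. if pos_pt m p then (\<Prod>j\<in>S. p j powi e j) else 0)"

lemma qsf_one_eq_div:
  assumes "j \<in> {1..m}"
  shows "qsf_one m = (\<lambda>p. coord m j p / coord m j p)"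
  using assms unfolding qsf_one_def coord_def pos_pt_def by (intro ext) force

lemma coord_powi_Suc:
  assumes "j \<in> {1..m}"
  shows "coord_powi m j (int (Suc k)) = (\<lambda>p. coord_powi m j (int k) p * coord m j p)"
proof
  fix p
  show "coord_powi m j (int (Suc k)) p = coord_powi m j (int k) p * coord m j p"
  proof (cases "pos_pt m p")
    case True
    then have "p j \<noteq> 0"
      using assms unfolding pos_pt_def by force
    then have "p j powi (int k + 1) = p j powi int k * p j"
      by (rule power_int_add_1[OF disjI1])
    then show ?thesis
      using True by (simp add: coord_powi_def coord_def add.commute)
  qed (simp add: coord_powi_def coord_def)
qed

lemma coord_powi_minus:
  "coord_powi m j (- int k) = (\<lambda>p. qsf_one m p / coord_powi m j (int k) p)"
  by (intro ext) (simp add: coord_powi_def qsf_one_def power_int_minus_divide)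

lemma laurent_mon_on_insert:
  "j \<notin> S \<Longrightarrow> finite S \<Longrightarrow>
    laurent_mon_on m (insert j S) e = (\<lambda>p. laurent_mon_on m S e p * coord_powi m j (e j) p)"
  by (intro ext) (simp add: laurent_mon_on_def coord_powi_def mult.commute)

lemma
  assumes "j \<in> {1..m}" and "trop_hom m lo hi \<phi>"
  shows qsf_one_in_qsf: "qsf_one m \<in> qsf m"
    and trop_hom_qsf_one: "\<phi> (qsf_one m) = (\<lambda>l. 0)"
proof -
  have "coord m j \<in> qsf m"
    using assms(1) by (intro qsf.gen) auto
  then show "qsf_one m \<in> qsf m" "\<phi> (qsf_one m) = (\<lambda>l. 0)"
    unfolding qsf_one_eq_div[OF assms(1)]
    using trop_hom_divide[OF assms(2)] qsf.divide by (simp_all del: divide_self_if)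
qed

lemma
  assumes "j \<in> {1..m}" and "trop_hom m lo hi \<phi>"
  shows coord_powi_nat_in_qsf: "coord_powi m j (int k) \<in> qsf m"
    and trop_hom_coord_powi_nat: "\<phi> (coord_powi m j (int k)) = (\<lambda>l. int k * \<phi> (coord m j) l)"
proof (induction k)
  case 0
  have "coord_powi m j (int 0) = qsf_one m"
    unfolding coord_powi_def qsf_one_def by (intro ext) simp
  then show "coord_powi m j (int 0) \<in> qsf m" "\<phi> (coord_powi m j (int 0)) = (\<lambda>l. int 0 * \<phi> (coord m j) l)"
    using qsf_one_in_qsf[OF assms] trop_hom_qsf_one[OF assms] by simp_all
next
  case (Suc k)
  have "coord m j \<in> qsf m"
    using assms(1) by (intro qsf.gen) auto
  then show "coord_powi m j (int (Suc k)) \<in> qsf m"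
    and "\<phi> (coord_powi m j (int (Suc k))) = (\<lambda>l. int (Suc k) * \<phi> (coord m j) l)"
    unfolding coord_powi_Suc[OF assms(1)]
    using Suc qsf.mult trop_hom_mult[OF assms(2)] by (auto simp: algebra_simps)
qed

lemma
  assumes "j \<in> {1..m}" and "trop_hom m lo hi \<phi>"
  shows coord_powi_in_qsf: "coord_powi m j k \<in> qsf m"
    and trop_hom_coord_powi: "\<phi> (coord_powi m j k) = (\<lambda>l. k * \<phi> (coord m j) l)"
proof -
  have "coord_powi m j k \<in> qsf m \<and> \<phi> (coord_powi m j k) = (\<lambda>l. k * \<phi> (coord m j) l)"
  proof (cases k rule: int_cases2)
    case (nonneg q)
    then show ?thesis
      using coord_powi_nat_in_qsf[OF assms] trop_hom_coord_powi_nat[OF assms] by simp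
  next
    case (nonpos q)
    then show ?thesis
      using coord_powi_nat_in_qsf[OF assms] trop_hom_coord_powi_nat[OF assms]
        qsf_one_in_qsf[OF assms] trop_hom_qsf_one[OF assms] qsf.divide trop_hom_divide[OF assms(2)]
      by (simp add: coord_powi_minus)
  qed
  then show "coord_powi m j k \<in> qsf m" "\<phi> (coord_powi m j k) = (\<lambda>l. k * \<phi> (coord m j) l)"
    by simp_all
qed

lemma
  assumes "1 \<le> m" and "trop_hom m lo hi \<phi>" and "S \<subseteq> {1..m}"
  shows laurent_mon_on_in_qsf: "laurent_mon_on m S e \<in> qsf m"
    and trop_hom_laurent_mon_on:
      "\<phi> (laurent_mon_on m S e) = (\<lambda>l. \<Sum>j\<in>S. e j * \<phi> (coord m j) l)"
proof -
  have "finite S"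
    using assms(3) finite_subset by blast
  then have "laurent_mon_on m S e \<in> qsf m \<and>
      \<phi> (laurent_mon_on m S e) = (\<lambda>l. \<Sum>j\<in>S. e j * \<phi> (coord m j) l)"
    using assms(3)
  proof (induction S rule: finite_induct)
    case empty
    have "laurent_mon_on m {} e = qsf_one m"
      unfolding laurent_mon_on_def qsf_one_def by (intro ext) simp
    then show ?case
      using qsf_one_in_qsf[of 1, OF _ assms(2)] trop_hom_qsf_one[of 1, OF _ assms(2)] assms(1)
      by simp
  next
    case (insert j S)
    then have j: "j \<in> {1..m}"
      by simp
    show ?case
      unfolding laurent_mon_on_insert[OF insert(2,1)]
      using insert coord_powi_in_qsf[OF j assms(2)] trop_hom_coord_powi[OF j assms(2)]
        qsf.mult trop_hom_mult[OF assms(2)]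
      by (auto simp: algebra_simps)
  qed
  then show "laurent_mon_on m S e \<in> qsf m"
    and "\<phi> (laurent_mon_on m S e) = (\<lambda>l. \<Sum>j\<in>S. e j * \<phi> (coord m j) l)"
    by simp_all
qed

lemma
  assumes "1 \<le> m" and "trop_hom m lo hi \<phi>"
  shows laurent_mon_in_qsf: "laurent_mon m e \<in> qsf m"
    and trop_hom_laurent_mon:
      "\<phi> (laurent_mon m e) = (\<lambda>l. \<Sum>j\<in>{1..m}. e j * \<phi> (coord m j) l)"
proof -
  have "laurent_mon m e = laurent_mon_on m {1..m} e"
    unfolding laurent_mon_def laurent_mon_on_def by simp
  then show "laurent_mon m e \<in> qsf m"
    and "\<phi> (laurent_mon m e) = (\<lambda>l. \<Sum>j\<in>{1..m}. e j * \<phi> (coord m j) l)"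
    using laurent_mon_on_in_qsf[OF assms] trop_hom_laurent_mon_on[OF assms] by simp_all
qed

lemma ext_matrix_eq:
  assumes "1 \<le> j" and "y k \<in> trop_elems (n + 1) m"
  shows "ext_matrix n B y j k = (if j \<le> n then B j k else 0) + y k j"
  using assms by (simp add: ext_matrix_def trop_elems_def)

lemma sum_mult_ext_matrix:
  fixes P c :: "nat \<Rightarrow> int"
  assumes "n \<le> m" and "1 \<le> i" and y: "y k \<in> trop_elems (n + 1) m'"
    and P: "\<forall>j\<in>{1..m}. P j = (if i = j \<and> j \<le> n then 1 else 0) + c j"
  shows "(\<Sum>j\<in>{1..m}. P j * ext_matrix n B y j k)
    = (if i \<le> n then B i k else 0) + (\<Sum>j\<in>{1..m}. y k j * c j) + (\<Sum>j\<in>{1..n}. B j k * c j)"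
proof -
  have y_low: "y k j = 0" if "j \<in> {1..n}" for j
    using y that by (simp add: trop_elems_def)
  have "(\<Sum>j\<in>{1..m}. P j * ext_matrix n B y j k)
      = (\<Sum>j\<in>{1..m}. (if i = j \<and> j \<le> n then B j k else 0) + y k j * c j + (if j \<le> n then B j k * c j else 0))"
    using P y_low by (intro sum.cong) (auto simp: ext_matrix_eq[where y = y, OF _ y] algebra_simps)
  also have "\<dots> = (\<Sum>j\<in>{1..m}. if i = j \<and> j \<le> n then B j k else 0) + (\<Sum>j\<in>{1..m}. y k j * c j)
      + (\<Sum>j\<in>{1..m}. if j \<le> n then B j k * c j else 0)"
    by (simp add: sum.distrib)
  also have "(\<Sum>j\<in>{1..m}. if i = j \<and> j \<le> n then B j k else 0)
      = (\<Sum>j\<in>{1..m}. if i = j then (if i \<le> n then B i k else 0) else 0)"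
    by (intro sum.cong) auto
  also have "\<dots> = (if i \<le> n then B i k else 0)"
    using assms(1,2) by (simp add: sum.delta)
  also have "(\<Sum>j\<in>{1..m}. if j \<le> n then B j k * c j else 0) = (\<Sum>j\<in>{1..n}. B j k * c j)"
    using assms(1) by (intro sum.mono_neutral_cong_right) auto
  finally show ?thesis .
qed

lemma exponent_matrix_entry:
  fixes \<phi> :: "((nat \<Rightarrow> real) \<Rightarrow> real) \<Rightarrow> (nat \<Rightarrow> int)"
  assumes "n \<le> mb" and i: "i \<in> {1..mb}" and j: "j \<in> {1..m}"
    and psi_low: "\<forall>i\<in>{1..n}. \<psi> (coord m i) = (\<lambda>p. coord mb i p * laurent_mon mb (\<phi> (coord m i)) p)"
    and psi_high: "\<forall>i\<in>{n+1..m}. \<psi> (coord m i) = laurent_mon mb (\<phi> (coord m i))"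
    and Psi: "\<forall>j\<in>{1..m}. \<psi> (coord m j) = laurent_mon mb (\<lambda>i. \<Psi> i j)"
  shows "\<Psi> i j = (if i = j \<and> j \<le> n then 1 else 0) + \<phi> (coord m j) i"
proof (cases "j \<le> n")
  case True
  have "laurent_mon mb (\<lambda>i. \<Psi> i j) = \<psi> (coord m j)"
    using Psi j by simp
  also have "\<dots> = (\<lambda>p. coord mb j p * laurent_mon mb (\<phi> (coord m j)) p)"
    using psi_low j True by simp
  also have "\<dots> = laurent_mon mb ((\<phi> (coord m j))(j := \<phi> (coord m j) j + 1))"
    using j True \<open>n \<le> mb\<close> by (intro coord_mult_laurent_mon) simp
  finally have "laurent_mon mb (\<lambda>i. \<Psi> i j)
      = laurent_mon mb ((\<phi> (coord m j))(j := \<phi> (coord m j) j + 1))" .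
  from laurent_mon_inject[OF this i] show ?thesis
    using True by auto
next
  case False
  then have "laurent_mon mb (\<lambda>i. \<Psi> i j) = laurent_mon mb (\<phi> (coord m j))"
    using Psi psi_high j by simp
  from laurent_mon_inject[OF this i] show ?thesis
    using False by simp
qed

theorem proposition4p3p5:
  fixes n m mb :: nat
    and \<phi> :: "((nat \<Rightarrow> real) \<Rightarrow> real) \<Rightarrow> (nat \<Rightarrow> int)"
    and \<psi> :: "((nat \<Rightarrow> real) \<Rightarrow> real) \<Rightarrow> ((nat \<Rightarrow> real) \<Rightarrow> real)"
    and B :: "nat \<Rightarrow> nat \<Rightarrow> int"
    and y :: "nat \<Rightarrow> nat \<Rightarrow> int"
    and \<Psi> :: "nat \<Rightarrow> nat \<Rightarrow> int"
  assumes "n \<le> m" and "n \<le> mb"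
    and phi: "trop_hom m (n + 1) mb \<phi>"
    and psi: "sf_hom m mb \<psi>"
    and psi_low: "\<forall>i\<in>{1..n}. \<psi> (coord m i) = (\<lambda>p. coord mb i p * laurent_mon mb (\<phi> (coord m i)) p)"
    and psi_high: "\<forall>i\<in>{n+1..m}. \<psi> (coord m i) = laurent_mon mb (\<phi> (coord m i))"
    and B: "skew_symmetrizable n B"
    and y: "\<forall>k\<in>{1..n}. y k \<in> trop_elems (n + 1) m"
    and Psi: "\<forall>j\<in>{1..m}. \<psi> (coord m j) = laurent_mon mb (\<lambda>i. \<Psi> i j)"
  shows "\<forall>i\<in>{1..mb}. \<forall>k\<in>{1..n}.
           ext_matrix n B
             (\<lambda>k'. trop_times (\<phi> (laurent_mon m (y k')))
                     (\<lambda>j. \<Sum>i'\<in>{1..n}. B i' k' * \<phi> (coord m i') j)) i k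
           = (\<Sum>j\<in>{1..m}. \<Psi> i j * ext_matrix n B y j k)"
proof (intro ballI)
  fix i k
  assume i: "i \<in> {1..mb}" and k: "k \<in> {1..n}"
  then have "1 \<le> m"
    using \<open>n \<le> m\<close> by simp
  have Psi_entry: "\<forall>j\<in>{1..m}. \<Psi> i j = (if i = j \<and> j \<le> n then 1 else 0) + \<phi> (coord m j) i"
    using exponent_matrix_entry[OF \<open>n \<le> mb\<close> i _ psi_low psi_high Psi] by blast
  show "ext_matrix n B
          (\<lambda>k'. trop_times (\<phi> (laurent_mon m (y k')))
                  (\<lambda>j. \<Sum>i'\<in>{1..n}. B i' k' * \<phi> (coord m i') j)) i k
        = (\<Sum>j\<in>{1..m}. \<Psi> i j * ext_matrix n B y j k)" (is "?lhs = _")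
  proof -
    have "?lhs = (if i \<le> n then B i k else 0) + \<phi> (laurent_mon m (y k)) i
        + (\<Sum>j\<in>{1..n}. B j k * \<phi> (coord m j) i)"
      using trop_hom_vanishes_below[OF phi] laurent_mon_in_qsf[OF \<open>1 \<le> m\<close> phi] qsf.gen \<open>n \<le> m\<close>
      by (auto simp: ext_matrix_def trop_times_def)
    also have "\<dots> = (\<Sum>j\<in>{1..m}. \<Psi> i j * ext_matrix n B y j k)"
      using sum_mult_ext_matrix[OF \<open>n \<le> m\<close> _ _ Psi_entry, of y k m B] i y k
        trop_hom_laurent_mon[OF \<open>1 \<le> m\<close> phi] by simp
    finally show ?thesis .
  qed
qed

end
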